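(* Let $\alpha\ge0$, $\beta\ge0$, $\gamma<0$, $\omega^2=1$, $ca\ge0$, $N\ge2$, and $r>0$. Let $(x_j(t),y_j(t))_{j=1}^N$ be a solution of $$\dot{x}_i=y_i+\frac{ca}{N}\sum_{j=1}^N(x_j-x_i),\qquad \dot{y}_i=-(\alpha x_i^2+\beta y_i^2-\gamma)y_i-\omega^2x_i+\frac{ca}{N}\sum_{j=1}^N(y_j-y_i),$$ with $x_j(0)^2+y_j(0)^2\le r^2$ for all $j$. Consider the associated (time-dependent) virtual system on $\mathbb{R}^2$ $$\dot x=y+\frac{ca}{N}\Big(\sum_{j=1}^N x_j(t)-Nx\Big),\qquad \dot y=-(\alpha x^2+\beta y^2-\gamma)y-\omega^2x+\frac{ca}{N}\Big(\sum_{j=1}^N y_j(t)-Ny\Big).$$ Then for every $t\ge0$ and every $(x,y)$ with $x^2+y^2=r^2$, the vector field $(\dot x,\dot y)$ of the virtual system satisfies $x\dot x+y\dot y\le0$. Consequently the closed disk $\{x^2+y^2\le r^2\}$ is a trapping (forward invariant) region for the virtual system, and in particular $x_k(t)^2+y_k(t)^2\le r^2$ for all $k$ and all $t\ge0$. *)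

theory Defs
  imports "HOL-Analysis.Analysis"
begin

definition net_x :: "real \<Rightarrow> nat \<Rightarrow> (nat \<Rightarrow> real \<Rightarrow> real) \<Rightarrow> (nat \<Rightarrow> real \<Rightarrow> real) \<Rightarrow> nat \<Rightarrow> real \<Rightarrow> real" where
  "net_x ca N xs ys i t = ys i t + ca / real N * (\<Sum>j=1..N. xs j t - xs i t)"

definition net_y :: "real \<Rightarrow> real \<Rightarrow> real \<Rightarrow> real \<Rightarrow> real \<Rightarrow> nat \<Rightarrow> (nat \<Rightarrow> real \<Rightarrow> real) \<Rightarrow> (nat \<Rightarrow> real \<Rightarrow> real) \<Rightarrow> nat \<Rightarrow> real \<Rightarrow> real" where
  "net_y \<alpha> \<beta> \<gamma> \<omega> ca N xs ys i t =
     - (\<alpha> * (xs i t)^2 + \<beta> * (ys i t)^2 - \<gamma>) * ys i t - \<omega>^2 * xs i t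
     + ca / real N * (\<Sum>j=1..N. ys j t - ys i t)"

definition virt_x :: "real \<Rightarrow> nat \<Rightarrow> (nat \<Rightarrow> real \<Rightarrow> real) \<Rightarrow> real \<Rightarrow> real \<Rightarrow> real \<Rightarrow> real" where
  "virt_x ca N xs t x y = y + ca / real N * ((\<Sum>j=1..N. xs j t) - real N * x)"

definition virt_y :: "real \<Rightarrow> real \<Rightarrow> real \<Rightarrow> real \<Rightarrow> real \<Rightarrow> nat \<Rightarrow> (nat \<Rightarrow> real \<Rightarrow> real) \<Rightarrow> real \<Rightarrow> real \<Rightarrow> real \<Rightarrow> real" where
  "virt_y \<alpha> \<beta> \<gamma> \<omega> ca N ys t x y =
     - (\<alpha> * x^2 + \<beta> * y^2 - \<gamma>) * y - \<omega>^2 * x + ca / real N * ((\<Sum>j=1..N. ys j t) - real N * y)"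

end

theory Submission
  imports Defs
begin

text \<open>Follow the largest squared norm \<open>x\<^sub>i\<^sup>2 + y\<^sub>i\<^sup>2\<close> over the network. For the oscillator
  itself the squared norm has derivative \<open>2(\<gamma> - \<alpha>x\<^sup>2 - \<beta>y\<^sup>2)y\<^sup>2 \<le> 0\<close>, because \<open>\<omega>\<^sup>2 = 1\<close> makes the
  rotational terms cancel; the diffusive coupling pulls each oscillator towards the others, and for
  an oscillator of maximal norm every other one lies in its disk, so the coupling does not increase
  its norm either. Hence the network never leaves the disk of radius \<open>r\<close>, and then the same
  computation, with the network states as the drive, shows that the virtual vector field points
  inwards on the circle of radius \<open>r\<close>. Non-strict dissipation only gives a trapping region after
  the usual perturbation: the barrier \<open>r\<^sup>2 + \<epsilon>(1 + t)\<close> cannot be reached for the first time.\<close>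

lemma oscillator_field_dissipative:
  fixes \<alpha> \<beta> \<gamma> \<omega> x y :: real
  assumes "\<alpha> \<ge> 0" "\<beta> \<ge> 0" "\<gamma> \<le> 0" "\<omega>^2 = 1"
  shows "x * y + y * (- (\<alpha> * x^2 + \<beta> * y^2 - \<gamma>) * y - \<omega>^2 * x) \<le> 0"
proof -
  have "x * y + y * (- (\<alpha> * x^2 + \<beta> * y^2 - \<gamma>) * y - \<omega>^2 * x)
      = \<gamma> * y^2 - (\<alpha> * x^2 + \<beta> * y^2) * y^2"
    using assms(4) by (simp add: algebra_simps power2_eq_square)
  moreover have "\<gamma> * y^2 \<le> 0" using assms(3) by (simp add: mult_nonpos_nonneg)
  moreover have "0 \<le> (\<alpha> * x^2 + \<beta> * y^2) * y^2" using assms(1,2) by simp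
  ultimately show ?thesis by linarith
qed

lemma inner_diff_nonpos_if_norm_le:
  fixes x y X Y :: real
  assumes "X^2 + Y^2 \<le> x^2 + y^2"
  shows "x * (X - x) + y * (Y - y) \<le> 0"
proof -
  have "0 \<le> (x - X)^2 + (y - Y)^2" by simp
  with assms show ?thesis by (simp add: power2_eq_square algebra_simps)
qed

lemma coupled_field_dissipative:
  fixes \<alpha> \<beta> \<gamma> \<omega> \<kappa> x y :: real and X Y :: "'j \<Rightarrow> real"
  assumes "\<alpha> \<ge> 0" "\<beta> \<ge> 0" "\<gamma> \<le> 0" "\<omega>^2 = 1" "\<kappa> \<ge> 0"
    and inside: "\<forall>j\<in>J. (X j)^2 + (Y j)^2 \<le> x^2 + y^2"
  shows "x * (y + \<kappa> * (\<Sum>j\<in>J. X j - x))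
       + y * (- (\<alpha> * x^2 + \<beta> * y^2 - \<gamma>) * y - \<omega>^2 * x + \<kappa> * (\<Sum>j\<in>J. Y j - y)) \<le> 0"
proof -
  have "(\<Sum>j\<in>J. x * (X j - x) + y * (Y j - y)) \<le> 0"
    using inside by (intro sum_nonpos) (simp add: inner_diff_nonpos_if_norm_le)
  with \<open>\<kappa> \<ge> 0\<close> have "\<kappa> * (x * (\<Sum>j\<in>J. X j - x) + y * (\<Sum>j\<in>J. Y j - y)) \<le> 0"
    by (simp add: mult_nonneg_nonpos sum_distrib_left sum.distrib)
  moreover have "x * y + y * (- (\<alpha> * x^2 + \<beta> * y^2 - \<gamma>) * y - \<omega>^2 * x) \<le> 0"
    using assms(1-4) by (rule oscillator_field_dissipative)
  ultimately show ?thesis by (simp add: algebra_simps)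
qed

lemma net_field_dissipative:
  fixes \<alpha> \<beta> \<gamma> \<omega> ca :: real
  assumes "\<alpha> \<ge> 0" "\<beta> \<ge> 0" "\<gamma> \<le> 0" "\<omega>^2 = 1" "ca \<ge> 0"
    and "\<forall>j\<in>{1..N}. (xs j t)^2 + (ys j t)^2 \<le> (xs i t)^2 + (ys i t)^2"
  shows "xs i t * net_x ca N xs ys i t + ys i t * net_y \<alpha> \<beta> \<gamma> \<omega> ca N xs ys i t \<le> 0"
  unfolding net_x_def net_y_def
  using assms by (intro coupled_field_dissipative) simp_all

lemma virt_field_dissipative:
  fixes \<alpha> \<beta> \<gamma> \<omega> ca x y :: real
  assumes "\<alpha> \<ge> 0" "\<beta> \<ge> 0" "\<gamma> \<le> 0" "\<omega>^2 = 1" "ca \<ge> 0"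
    and "\<forall>j\<in>{1..N}. (xs j t)^2 + (ys j t)^2 \<le> x^2 + y^2"
  shows "x * virt_x ca N xs t x y + y * virt_y \<alpha> \<beta> \<gamma> \<omega> ca N ys t x y \<le> 0"
proof -
  have sum_diff: "(\<Sum>j=1..N. f j) - real N * z = (\<Sum>j=1..N. f j - z)"
    for f :: "nat \<Rightarrow> real" and z
    by (simp add: sum_subtractf)
  show ?thesis
    unfolding virt_x_def virt_y_def sum_diff
    using assms by (intro coupled_field_dissipative) simp_all
qed

lemma first_nonneg_time:
  fixes g :: "'i \<Rightarrow> real \<Rightarrow> real"
  assumes "finite I" and cont: "\<And>i. i \<in> I \<Longrightarrow> continuous_on {a..b} (g i)"
    and start: "\<And>i. i \<in> I \<Longrightarrow> g i a < 0"
    and "i0 \<in> I" "t0 \<in> {a..b}" "0 \<le> g i0 t0"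
  obtains i s where "i \<in> I" "s \<in> {a<..b}" "g i s = 0"
    "\<forall>j\<in>I. \<forall>t\<in>{a..<s}. g j t < 0" "\<forall>j\<in>I. g j s \<le> 0"
proof -
  define S where "S = (\<Union>i\<in>I. {a..b} \<inter> g i -` {0..})"
  have "closed S"
    unfolding S_def using \<open>finite I\<close> cont
    by (intro closed_UN) (auto intro: continuous_closed_preimage)
  moreover have "S \<subseteq> {a..b}" unfolding S_def by auto
  ultimately have "compact S"
    using compact_Int_closed[OF compact_Icc, of S a b] by (simp add: Int_absorb1)
  moreover have "t0 \<in> S" using assms(4-6) unfolding S_def by auto
  ultimately obtain s where "s \<in> S" and s_min: "\<forall>t\<in>S. s \<le> t"
    using compact_attains_inf by blast
  then obtain i where i: "i \<in> I" "s \<in> {a..b}" "0 \<le> g i s" unfolding S_def by auto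
  have below: "\<forall>j\<in>I. \<forall>t\<in>{a..<s}. g j t < 0"
  proof (intro ballI)
    fix j t assume "j \<in> I" "t \<in> {a..<s}"
    show "g j t < 0"
    proof (rule ccontr)
      assume "\<not> g j t < 0"
      with \<open>j \<in> I\<close> \<open>t \<in> {a..<s}\<close> i(2) have "t \<in> S" unfolding S_def by (force simp: not_less)
      with s_min \<open>t \<in> {a..<s}\<close> show False by force
    qed
  qed
  have "a \<noteq> s" using i start by force
  with i(2) have "a < s" by simp
  have at_most_zero: "\<forall>j\<in>I. g j s \<le> 0"
  proof (rule ccontr)
    assume "\<not> ?thesis"
    then obtain j where j: "j \<in> I" "0 < g j s" by force
    have "continuous_on {a..s} (g j)" using cont[OF j(1)] i(2) by (auto intro: continuous_on_subset)
    then obtain z where "a \<le> z" "z \<le> s" "g j z = 0"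
      using IVT'[of "g j" a 0 s] start[OF j(1)] j(2) \<open>a < s\<close> by force
    with below j show False by force
  qed
  show thesis
    using that[of i s] i \<open>a < s\<close> below at_most_zero by force
qed

lemma finite_family_stays_below:
  fixes V V' :: "'i \<Rightarrow> real \<Rightarrow> real"
  assumes "finite I"
    and deriv: "\<And>i t. i \<in> I \<Longrightarrow> t \<in> {a..b} \<Longrightarrow>
                  (V i has_real_derivative V' i t) (at t within {a..b})"
    and start: "\<And>i. i \<in> I \<Longrightarrow> V i a \<le> c"
    and dissipative: "\<And>i t. i \<in> I \<Longrightarrow> t \<in> {a..b} \<Longrightarrow> c \<le> V i t \<Longrightarrow>
                  \<forall>j\<in>I. V j t \<le> V i t \<Longrightarrow> V' i t \<le> 0"
    and "i \<in> I" "t \<in> {a..b}"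
  shows "V i t \<le> c"
proof -
  have below_barrier: "V i t < c + \<epsilon> * (1 + (t - a))" if "\<epsilon> > 0" for \<epsilon>
  proof (rule ccontr)
    define W where "W j s = V j s - c - \<epsilon> * (1 + (s - a))" for j s
    have W_deriv: "(W j has_real_derivative V' j s - \<epsilon>) (at s within {a..b})"
      if "j \<in> I" "s \<in> {a..b}" for j s
      unfolding W_def using deriv[OF that] by (auto intro!: derivative_eq_intros)
    assume "\<not> V i t < c + \<epsilon> * (1 + (t - a))"
    then have "0 \<le> W i t" by (simp add: W_def)
    obtain j s where j: "j \<in> I" and s: "s \<in> {a<..b}" and "W j s = 0"
      and below: "\<forall>k\<in>I. \<forall>u\<in>{a..<s}. W k u < 0" and "\<forall>k\<in>I. W k s \<le> 0"
    proof (rule first_nonneg_time[where g = W, OF \<open>finite I\<close> _ _ \<open>i \<in> I\<close> \<open>t \<in> {a..b}\<close>])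
      show "continuous_on {a..b} (W k)" if "k \<in> I" for k
        using W_deriv[OF that] by (rule DERIV_continuous_on)
      show "W k a < 0" if "k \<in> I" for k
        using start[OF that] \<open>\<epsilon> > 0\<close> by (simp add: W_def)
      show "0 \<le> W i t" by fact
    qed
    moreover have "0 \<le> \<epsilon> * (1 + (s - a))" using \<open>\<epsilon> > 0\<close> s by simp
    ultimately have "c \<le> V j s" "\<forall>k\<in>I. V k s \<le> V j s"
      by (auto simp: W_def)
    with j s have "V' j s - \<epsilon> < 0"
      using dissipative[of j s] \<open>\<epsilon> > 0\<close> by auto
    then obtain d where "d > 0" and decreasing:
        "\<forall>h>0. s - h \<in> {a..b} \<longrightarrow> h < d \<longrightarrow> W j s < W j (s - h)"
      using has_real_derivative_neg_dec_left W_deriv j s by (metis greaterThanAtMost_iff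
          atLeastAtMost_iff less_imp_le)
    define h where "h = min (d / 2) (s - a)"
    have "0 < h" "s - h \<in> {a..<s}" "h < d"
      using \<open>d > 0\<close> s by (auto simp: h_def)
    then have "W j s < W j (s - h)" using decreasing s by auto
    with below j \<open>s - h \<in> {a..<s}\<close> \<open>W j s = 0\<close> show False by force
  qed
  show ?thesis
  proof (rule field_le_epsilon)
    fix e :: real assume "0 < e"
    have "1 + (t - a) > 0" using \<open>t \<in> {a..b}\<close> by simp
    then show "V i t \<le> c + e"
      using below_barrier[of "e / (1 + (t - a))"] \<open>0 < e\<close> by simp
  qed
qed

lemma network_stays_in_disk:
  fixes \<alpha> \<beta> \<gamma> \<omega> ca r :: real and xs ys :: "nat \<Rightarrow> real \<Rightarrow> real"
  assumes "\<alpha> \<ge> 0" "\<beta> \<ge> 0" "\<gamma> \<le> 0" "\<omega>^2 = 1" "ca \<ge> 0"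
    and solx: "\<And>i t. i \<in> {1..N} \<Longrightarrow> t \<ge> 0 \<Longrightarrow>
          (xs i has_real_derivative net_x ca N xs ys i t) (at t within {0..})"
    and soly: "\<And>i t. i \<in> {1..N} \<Longrightarrow> t \<ge> 0 \<Longrightarrow>
          (ys i has_real_derivative net_y \<alpha> \<beta> \<gamma> \<omega> ca N xs ys i t) (at t within {0..})"
    and init: "\<And>j. j \<in> {1..N} \<Longrightarrow> (xs j 0)^2 + (ys j 0)^2 \<le> r^2"
    and "k \<in> {1..N}" "t \<ge> 0"
  shows "(xs k t)^2 + (ys k t)^2 \<le> r^2"
proof (rule finite_family_stays_below[where I = "{1..N}" and a = 0 and b = t
      and V = "\<lambda>i s. (xs i s)^2 + (ys i s)^2"
      and V' = "\<lambda>i s. 2 * (xs i s * net_x ca N xs ys i s + ys i s * net_y \<alpha> \<beta> \<gamma> \<omega> ca N xs ys i s)"])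
  fix i s assume "i \<in> {1..N}" "s \<in> {0..t}"
  then have "(xs i has_real_derivative net_x ca N xs ys i s) (at s within {0..t})"
    "(ys i has_real_derivative net_y \<alpha> \<beta> \<gamma> \<omega> ca N xs ys i s) (at s within {0..t})"
    using has_field_derivative_subset[OF solx, of i s "{0..t}"]
      has_field_derivative_subset[OF soly, of i s "{0..t}"] by auto
  then show "((\<lambda>s. (xs i s)^2 + (ys i s)^2) has_real_derivative
      2 * (xs i s * net_x ca N xs ys i s + ys i s * net_y \<alpha> \<beta> \<gamma> \<omega> ca N xs ys i s)) (at s within {0..t})"
    by (auto intro!: derivative_eq_intros simp: algebra_simps)
next
  fix i s assume "\<forall>j\<in>{1..N}. (xs j s)^2 + (ys j s)^2 \<le> (xs i s)^2 + (ys i s)^2"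
  then have "xs i s * net_x ca N xs ys i s + ys i s * net_y \<alpha> \<beta> \<gamma> \<omega> ca N xs ys i s \<le> 0"
    by (rule net_field_dissipative[OF assms(1-5)])
  then show "2 * (xs i s * net_x ca N xs ys i s + ys i s * net_y \<alpha> \<beta> \<gamma> \<omega> ca N xs ys i s) \<le> 0"
    by simp
qed (use init assms(9,10) in auto)

lemma virtual_trajectory_stays_in_disk:
  fixes \<alpha> \<beta> \<gamma> \<omega> ca r :: real and xs ys :: "nat \<Rightarrow> real \<Rightarrow> real" and u v :: "real \<Rightarrow> real"
  assumes "\<alpha> \<ge> 0" "\<beta> \<ge> 0" "\<gamma> \<le> 0" "\<omega>^2 = 1" "ca \<ge> 0"
    and network_inside: "\<And>j t. j \<in> {1..N} \<Longrightarrow> t \<ge> 0 \<Longrightarrow> (xs j t)^2 + (ys j t)^2 \<le> r^2"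
    and "0 \<le> t0"
    and solu: "\<And>t. t \<in> {t0..t1} \<Longrightarrow>
          (u has_real_derivative virt_x ca N xs t (u t) (v t)) (at t within {t0..t1})"
    and solv: "\<And>t. t \<in> {t0..t1} \<Longrightarrow>
          (v has_real_derivative virt_y \<alpha> \<beta> \<gamma> \<omega> ca N ys t (u t) (v t)) (at t within {t0..t1})"
    and init: "(u t0)^2 + (v t0)^2 \<le> r^2"
    and "t \<in> {t0..t1}"
  shows "(u t)^2 + (v t)^2 \<le> r^2"
proof (rule finite_family_stays_below[where I = "UNIV :: unit set" and a = t0 and b = t1
      and V = "\<lambda>_ s. (u s)^2 + (v s)^2"
      and V' = "\<lambda>_ s. 2 * (u s * virt_x ca N xs s (u s) (v s) + v s * virt_y \<alpha> \<beta> \<gamma> \<omega> ca N ys s (u s) (v s))"])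
  fix s assume "s \<in> {t0..t1}"
  with solu solv show "((\<lambda>s. (u s)^2 + (v s)^2) has_real_derivative
      2 * (u s * virt_x ca N xs s (u s) (v s) + v s * virt_y \<alpha> \<beta> \<gamma> \<omega> ca N ys s (u s) (v s))) (at s within {t0..t1})"
    by (auto intro!: derivative_eq_intros simp: algebra_simps)
next
  fix s assume "s \<in> {t0..t1}" "r^2 \<le> (u s)^2 + (v s)^2"
  with network_inside \<open>0 \<le> t0\<close> have "\<forall>j\<in>{1..N}. (xs j s)^2 + (ys j s)^2 \<le> (u s)^2 + (v s)^2"
    by (meson atLeastAtMost_iff order.trans)
  then have "u s * virt_x ca N xs s (u s) (v s) + v s * virt_y \<alpha> \<beta> \<gamma> \<omega> ca N ys s (u s) (v s) \<le> 0"
    by (rule virt_field_dissipative[OF assms(1-5)])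
  then show "2 * (u s * virt_x ca N xs s (u s) (v s) + v s * virt_y \<alpha> \<beta> \<gamma> \<omega> ca N ys s (u s) (v s)) \<le> 0"
    by simp
qed (use init \<open>t \<in> {t0..t1}\<close> in auto)

theorem lemma4p6:
  fixes \<alpha> \<beta> \<gamma> \<omega> ca r :: real and N :: nat
    and xs ys :: "nat \<Rightarrow> real \<Rightarrow> real"
  assumes "\<alpha> \<ge> 0" and "\<beta> \<ge> 0" and "\<gamma> < 0" and "\<omega>^2 = 1" and "ca \<ge> 0"
    and "N \<ge> 2" and "r > 0"
    and solx: "\<And>i t. i \<in> {1..N} \<Longrightarrow> t \<ge> 0 \<Longrightarrow>
          (xs i has_real_derivative net_x ca N xs ys i t) (at t within {0..})"
    and soly: "\<And>i t. i \<in> {1..N} \<Longrightarrow> t \<ge> 0 \<Longrightarrow>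
          (ys i has_real_derivative net_y \<alpha> \<beta> \<gamma> \<omega> ca N xs ys i t) (at t within {0..})"
    and init: "\<And>j. j \<in> {1..N} \<Longrightarrow> (xs j 0)^2 + (ys j 0)^2 \<le> r^2"
  shows "(\<forall>t\<ge>0. \<forall>x y. x^2 + y^2 = r^2 \<longrightarrow>
            x * virt_x ca N xs t x y + y * virt_y \<alpha> \<beta> \<gamma> \<omega> ca N ys t x y \<le> 0)
       \<and> (\<forall>t0 t1 (u::real \<Rightarrow> real) (v::real \<Rightarrow> real). 0 \<le> t0 \<and> t0 \<le> t1
            \<and> (\<forall>t\<in>{t0..t1}. (u has_real_derivative virt_x ca N xs t (u t) (v t)) (at t within {t0..t1})
                           \<and> (v has_real_derivative virt_y \<alpha> \<beta> \<gamma> \<omega> ca N ys t (u t) (v t)) (at t within {t0..t1}))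
            \<and> (u t0)^2 + (v t0)^2 \<le> r^2
            \<longrightarrow> (\<forall>t\<in>{t0..t1}. (u t)^2 + (v t)^2 \<le> r^2))
       \<and> (\<forall>k\<in>{1..N}. \<forall>t\<ge>0. (xs k t)^2 + (ys k t)^2 \<le> r^2)"
proof -
  note coeffs = \<open>\<alpha> \<ge> 0\<close> \<open>\<beta> \<ge> 0\<close> less_imp_le[OF \<open>\<gamma> < 0\<close>] \<open>\<omega>^2 = 1\<close> \<open>ca \<ge> 0\<close>
  have network: "(xs k t)^2 + (ys k t)^2 \<le> r^2" if "k \<in> {1..N}" "t \<ge> 0" for k t
    using network_stays_in_disk[OF coeffs solx soly init that] .
  have inward: "x * virt_x ca N xs t x y + y * virt_y \<alpha> \<beta> \<gamma> \<omega> ca N ys t x y \<le> 0"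
    if "t \<ge> 0" "x^2 + y^2 = r^2" for t x y
    by (rule virt_field_dissipative[OF coeffs]) (use network that in simp)
  have trapping: "(u t)^2 + (v t)^2 \<le> r^2"
    if "0 \<le> t0" "\<forall>t\<in>{t0..t1}. (u has_real_derivative virt_x ca N xs t (u t) (v t)) (at t within {t0..t1})
                           \<and> (v has_real_derivative virt_y \<alpha> \<beta> \<gamma> \<omega> ca N ys t (u t) (v t)) (at t within {t0..t1})"
      "(u t0)^2 + (v t0)^2 \<le> r^2" "t \<in> {t0..t1}"
    for t0 t1 t u v
    by (rule virtual_trajectory_stays_in_disk[where u = u and v = v,
          OF coeffs network that(1) _ _ that(3,4)]) (use that(2) in auto)
  show ?thesis using inward trapping network by blast
qed

end
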